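(* Let $G$ be a locally compact group, $\delta>0$, and $\mu$ a continuous unitary character of $G$. Let $f:G\to\mathbb{C}$ be continuous and satisfy $$|f(xy)+\mu(y)f(xy^{-1})-2f(x)f(y)|\le\delta\quad\text{for all }x,y\in G.$$ Then either $f$ is bounded or $f(xy)+\mu(y)f(xy^{-1})=2f(x)f(y)$ for all $x,y\in G$.
   Context: A unitary character is a continuous homomorphism $\mu:G\to\{z\in\mathbb{C}:|z|=1\}$. *)

theory Defs
  imports "HOL-Analysis.Analysis" "HOL-Algebra.Group"
begin

definition locally_compact_group :: "('a, 'b) monoid_scheme \<Rightarrow> 'a topology \<Rightarrow> bool" where
  "locally_compact_group G T \<longleftrightarrow>
     group G \<and> topspace T = carrier G \<and>
     continuous_map (prod_topology T T) T (\<lambda>(x, y). x \<otimes>\<^bsub>G\<^esub> y) \<and>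
     continuous_map T T (\<lambda>x. inv\<^bsub>G\<^esub> x) \<and>
     locally_compact_space T \<and> Hausdorff_space T"

definition unitary_character :: "('a, 'b) monoid_scheme \<Rightarrow> 'a topology \<Rightarrow> ('a \<Rightarrow> complex) \<Rightarrow> bool" where
  "unitary_character G T \<mu> \<longleftrightarrow>
     continuous_map T euclidean \<mu> \<and>
     (\<forall>x\<in>carrier G. cmod (\<mu> x) = 1) \<and>
     (\<forall>x\<in>carrier G. \<forall>y\<in>carrier G. \<mu> (x \<otimes>\<^bsub>G\<^esub> y) = \<mu> x * \<mu> y)"

end

theory Submission
  imports Defs
begin

text \<open>Comparing the
defects at \<open>(x, y)\<close> and \<open>(x, y\<inverse>)\<close> gives \<open>2 f(x) (\<mu>(y) f(y\<inverse>) - f(y)) = O(\<delta>)\<close> for all \<open>x\<close>, so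
\<open>f(y) = \<mu>(y) f(y\<inverse>)\<close>; with this symmetry, for the defect \<open>E(x, y)\<close> the quantity \<open>2 f(w) E(x, y)\<close> is a combination of defects with
coefficients independent of \<open>w\<close>, so again \<open>E(x, y) = 0\<close>.\<close>

definition dalembert_defect ::
    "('a, 'b) monoid_scheme \<Rightarrow> ('a \<Rightarrow> complex) \<Rightarrow> ('a \<Rightarrow> complex) \<Rightarrow> 'a \<Rightarrow> 'a \<Rightarrow> complex" where
  "dalembert_defect G \<mu> f x y =
     f (x \<otimes>\<^bsub>G\<^esub> y) + \<mu> y * f (x \<otimes>\<^bsub>G\<^esub> inv\<^bsub>G\<^esub> y) - 2 * f x * f y"

lemma unbounded_mult_bounded_imp_zero:
  fixes f :: "'a \<Rightarrow> complex"
  assumes "\<not> (\<exists>M. \<forall>x\<in>A. cmod (f x) \<le> M)"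
    and "\<And>x. x \<in> A \<Longrightarrow> cmod (f x) * cmod c \<le> K"
  shows "c = 0"
proof (rule ccontr)
  assume "c \<noteq> 0"
  then have c_pos: "cmod c > 0" by simp
  obtain x where "x \<in> A" and "cmod (f x) > K / cmod c"
    using assms(1) by (meson not_le)
  then have "cmod (f x) * cmod c > K" using c_pos by (simp add: field_simps)
  with assms(2)[OF \<open>x \<in> A\<close>] show False by simp
qed

locale approx_mu_dalembert = group G for G (structure) +
  fixes \<mu> f :: "'a \<Rightarrow> complex" and \<delta> :: real
  assumes mu_norm: "x \<in> carrier G \<Longrightarrow> cmod (\<mu> x) = 1"
    and mu_mult: "x \<in> carrier G \<Longrightarrow> y \<in> carrier G \<Longrightarrow> \<mu> (x \<otimes> y) = \<mu> x * \<mu> y"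
    and defect_bound: "x \<in> carrier G \<Longrightarrow> y \<in> carrier G \<Longrightarrow> cmod (dalembert_defect G \<mu> f x y) \<le> \<delta>"
begin

abbreviation E :: "'a \<Rightarrow> 'a \<Rightarrow> complex" where
  "E \<equiv> dalembert_defect G \<mu> f"

lemma mu_one: "\<mu> \<one> = 1"
proof -
  have "\<mu> \<one> * \<mu> \<one> = \<mu> \<one> * 1" using mu_mult[of \<one> \<one>] by simp
  moreover have "\<mu> \<one> \<noteq> 0" using mu_norm[of \<one>] by auto
  ultimately show ?thesis by (metis mult_left_cancel)
qed

lemma mu_mult_inv: "y \<in> carrier G \<Longrightarrow> \<mu> y * \<mu> (inv y) = 1"
  by (metis inv_closed mu_mult mu_one r_inv)

lemma defect_minus_defect_inv:
  assumes "x \<in> carrier G" and "y \<in> carrier G"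
  shows "E x y - \<mu> y * E x (inv y) = 2 * f x * (\<mu> y * f (inv y) - f y)"
  using assms mu_mult_inv[OF assms(2)]
  by (simp add: dalembert_defect_def algebra_simps)

context
  assumes unbounded: "\<not> (\<exists>M. \<forall>x\<in>carrier G. cmod (f x) \<le> M)"
begin

lemma f_eq_mu_f_inv:
  assumes y: "y \<in> carrier G"
  shows "f y = \<mu> y * f (inv y)"
proof -
  have "cmod (f x) * cmod (\<mu> y * f (inv y) - f y) \<le> \<delta>" if x: "x \<in> carrier G" for x
  proof -
    have "2 * (cmod (f x) * cmod (\<mu> y * f (inv y) - f y)) = cmod (E x y - \<mu> y * E x (inv y))"
      using defect_minus_defect_inv[OF x y] by (simp add: norm_mult)
    also have "\<dots> \<le> cmod (E x y) + cmod (\<mu> y * E x (inv y))"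
      by (rule norm_triangle_ineq4)
    also have "\<dots> \<le> 2 * \<delta>"
      using defect_bound[OF x y] defect_bound[OF x inv_closed[OF y]] mu_norm[OF y]
      by (simp add: norm_mult)
    finally show ?thesis by simp
  qed
  then have "\<mu> y * f (inv y) - f y = 0"
    by (rule unbounded_mult_bounded_imp_zero[OF unbounded])
  then show ?thesis by simp
qed

definition left_defect :: "'a \<Rightarrow> 'a \<Rightarrow> complex" where
  "left_defect u v = f (v \<otimes> u) + \<mu> v * f (inv v \<otimes> u) - 2 * f u * f v"

lemma left_defect_eq:
  assumes u: "u \<in> carrier G" and v: "v \<in> carrier G"
  shows "left_defect u v = \<mu> u * E (inv u) v"
proof -
  have "f (inv u \<otimes> v) = \<mu> (inv u) * \<mu> v * f (inv v \<otimes> u)"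
    using f_eq_mu_f_inv[of "inv u \<otimes> v"] u v by (simp add: inv_mult_group mu_mult)
  moreover have "f (inv u \<otimes> inv v) = \<mu> (inv u) * \<mu> (inv v) * f (v \<otimes> u)"
    using f_eq_mu_f_inv[of "inv u \<otimes> inv v"] u v by (simp add: inv_mult_group mu_mult)
  moreover have "f (inv u) = \<mu> (inv u) * f u"
    using f_eq_mu_f_inv[of "inv u"] u by simp
  ultimately have "\<mu> u * E (inv u) v
      = (\<mu> u * \<mu> (inv u)) * (\<mu> v * f (inv v \<otimes> u) + (\<mu> v * \<mu> (inv v)) * f (v \<otimes> u) - 2 * f u * f v)"
    by (simp add: dalembert_defect_def algebra_simps)
  then show ?thesis
    using mu_mult_inv[OF u] mu_mult_inv[OF v] by (simp add: left_defect_def algebra_simps)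
qed

lemma left_defect_bound:
  "u \<in> carrier G \<Longrightarrow> v \<in> carrier G \<Longrightarrow> cmod (left_defect u v) \<le> \<delta>"
  using defect_bound mu_norm by (simp add: left_defect_eq norm_mult)

lemma defect_eq_zero:
  assumes x: "x \<in> carrier G" and y: "y \<in> carrier G"
  shows "E x y = 0"
proof -
  have "cmod (f w) * cmod (2 * E x y) \<le> 4 * \<delta> + 2 * cmod (f y) * \<delta>" if w: "w \<in> carrier G" for w
  proof -
    have combination: "2 * f w * E x y = - left_defect (x \<otimes> y) w + - \<mu> y * left_defect (x \<otimes> inv y) w
        + 2 * f y * left_defect x w + E (w \<otimes> x) y + \<mu> w * E (inv w \<otimes> x) y"
      using x y w by (simp add: dalembert_defect_def left_defect_def m_assoc algebra_simps)
    have "cmod (2 * f w * E x y) \<le> cmod (- left_defect (x \<otimes> y) w)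
        + cmod (- \<mu> y * left_defect (x \<otimes> inv y) w) + cmod (2 * f y * left_defect x w)
        + cmod (E (w \<otimes> x) y) + cmod (\<mu> w * E (inv w \<otimes> x) y)"
      unfolding combination by (intro norm_triangle_le add_right_mono order_refl)
    also have "\<dots> \<le> \<delta> + \<delta> + 2 * cmod (f y) * \<delta> + \<delta> + \<delta>"
    proof (intro add_mono)
      show "cmod (- left_defect (x \<otimes> y) w) \<le> \<delta>"
        using left_defect_bound x y w by simp
      show "cmod (- \<mu> y * left_defect (x \<otimes> inv y) w) \<le> \<delta>"
        using left_defect_bound[of "x \<otimes> inv y" w] mu_norm[OF y] x y w by (simp add: norm_mult)
      show "cmod (2 * f y * left_defect x w) \<le> 2 * cmod (f y) * \<delta>"
        using left_defect_bound[OF x w] by (simp add: norm_mult mult_left_mono)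
      show "cmod (E (w \<otimes> x) y) \<le> \<delta>"
        using defect_bound x y w by simp
      show "cmod (\<mu> w * E (inv w \<otimes> x) y) \<le> \<delta>"
        using defect_bound[of "inv w \<otimes> x" y] mu_norm[OF w] x y w by (simp add: norm_mult)
    qed
    finally show ?thesis by (simp add: norm_mult)
  qed
  then have "2 * E x y = 0"
    by (rule unbounded_mult_bounded_imp_zero[OF unbounded])
  then show ?thesis by simp
qed

end

end

theorem corollary5p9:
  fixes G :: "('a, 'b) monoid_scheme" and T :: "'a topology"
    and \<mu> f :: "'a \<Rightarrow> complex" and \<delta> :: real
  assumes "locally_compact_group G T"
    and "\<delta> > 0"
    and "unitary_character G T \<mu>"
    and "continuous_map T euclidean f"
    and "\<forall>x\<in>carrier G. \<forall>y\<in>carrier G.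
           cmod (f (x \<otimes>\<^bsub>G\<^esub> y) + \<mu> y * f (x \<otimes>\<^bsub>G\<^esub> inv\<^bsub>G\<^esub> y) - 2 * f x * f y) \<le> \<delta>"
  shows "(\<exists>M. \<forall>x\<in>carrier G. cmod (f x) \<le> M) \<or>
         (\<forall>x\<in>carrier G. \<forall>y\<in>carrier G.
           f (x \<otimes>\<^bsub>G\<^esub> y) + \<mu> y * f (x \<otimes>\<^bsub>G\<^esub> inv\<^bsub>G\<^esub> y) = 2 * f x * f y)"
proof -
  have "approx_mu_dalembert G \<mu> f \<delta>"
    using assms(1,3,5)
    by (auto simp: approx_mu_dalembert_def approx_mu_dalembert_axioms_def
        locally_compact_group_def unitary_character_def dalembert_defect_def)
  then interpret approx_mu_dalembert G \<mu> f \<delta> .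
  show ?thesis
    using defect_eq_zero by (auto simp: dalembert_defect_def)
qed

end
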